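(* Let $\mathcal{H}$ be a real Hilbert space with orthonormal basis $(\varphi_\gamma)_{\gamma\in\Gamma}$, let $g\in\mathcal{H}$, let $n\in\mathbb{N}$, and for $1\le i\le n$ let $1\le p_i\le 2$ and let $W_i=(w_{i,\gamma})_{\gamma\in\Gamma}$ be a sequence of strictly positive weights. Define $$\Phi:\mathcal{H}\to\mathbb{R}\cup\{+\infty\},\qquad \Phi(f)=\|f-g\|_{\mathcal{H}}^2+\sum_{i=1}^n |||f|||_{W_i,p_i}^{p_i},\qquad |||f|||_{W_i,p_i}=\Big(\sum_{\gamma\in\Gamma}w_{i,\gamma}|\langle f,\varphi_\gamma\rangle|^{p_i}\Big)^{1/p_i}.$$ For each $\gamma\in\Gamma$, write $g_\gamma=\langle g,\varphi_\gamma\rangle$ and let $S_{(w_{1,\gamma},\dots,w_{n,\gamma}),(p_1,\dots,p_n)}(g_\gamma)$ denote the minimizer of the function $M_\gamma:\mathbb{R}\to\mathbb{R}$, $M_\gamma(x)=x^2+g_\gamma^2-2g_\gamma x+w_{1,\gamma}|x|^{p_1}+\dots+w_{n,\gamma}|x|^{p_n}$. Then $$f_m=\sum_{\gamma\in\Gamma}S_{(w_{1,\gamma},\dots,w_{n,\gamma}),(p_1,\dots,p_n)}(g_\gamma)\,\varphi_\gamma$$ is a minimizer of $\Phi$.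
   Context: Inner products $\langle f,\varphi_\gamma\rangle$ are real. *)

theory Defs
  imports "HOL-Analysis.Analysis"
begin

definition orthonormal_basis :: "'g set \<Rightarrow> ('g \<Rightarrow> 'a::real_inner) \<Rightarrow> bool" where
  "orthonormal_basis \<Gamma> \<phi> \<longleftrightarrow>
     (\<forall>i\<in>\<Gamma>. \<forall>j\<in>\<Gamma>. inner (\<phi> i) (\<phi> j) = (if i = j then 1 else 0)) \<and>
     closure (span (\<phi> ` \<Gamma>)) = UNIV"

definition wnorm_pow :: "'g set \<Rightarrow> ('g \<Rightarrow> 'a::real_inner) \<Rightarrow> ('g \<Rightarrow> real) \<Rightarrow> real \<Rightarrow> 'a \<Rightarrow> ennreal" where
  "wnorm_pow \<Gamma> \<phi> w p f = (\<Sum>\<^sub>\<infinity>\<gamma>\<in>\<Gamma>. ennreal (w \<gamma> * \<bar>inner f (\<phi> \<gamma>)\<bar> powr p))"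

definition Phi :: "'g set \<Rightarrow> ('g \<Rightarrow> 'a::real_inner) \<Rightarrow> 'a \<Rightarrow> nat \<Rightarrow> (nat \<Rightarrow> 'g \<Rightarrow> real)
                   \<Rightarrow> (nat \<Rightarrow> real) \<Rightarrow> 'a \<Rightarrow> ennreal" where
  "Phi \<Gamma> \<phi> g n w p f = ennreal ((norm (f - g))\<^sup>2) + (\<Sum>i\<in>{1..n}. wnorm_pow \<Gamma> \<phi> (w i) (p i) f)"

definition Mfun :: "nat \<Rightarrow> (nat \<Rightarrow> real) \<Rightarrow> (nat \<Rightarrow> real) \<Rightarrow> real \<Rightarrow> real \<Rightarrow> real" where
  "Mfun n ws p y x = x\<^sup>2 + y\<^sup>2 - 2 * y * x + (\<Sum>i\<in>{1..n}. ws i * \<bar>x\<bar> powr p i)"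

definition Smin :: "nat \<Rightarrow> (nat \<Rightarrow> real) \<Rightarrow> (nat \<Rightarrow> real) \<Rightarrow> real \<Rightarrow> real" where
  "Smin n ws p y = (THE x. \<forall>z. Mfun n ws p y x \<le> Mfun n ws p y z)"

end

theory Submission
  imports Defs
begin

text \<open>By Parseval's identity \<open>\<Phi>(f)\<close> is the sum over \<open>\<gamma>\<close> of \<open>M\<^sub>\<gamma>(\<langle>f, \<phi>\<^sub>\<gamma>\<rangle>)\<close>,
  so \<open>\<Phi>\<close> decouples into independent scalar problems and is minimized by minimizing every
  \<open>M\<^sub>\<gamma>\<close> separately. Each \<open>M\<^sub>\<gamma>\<close> is \<open>(x - g\<^sub>\<gamma>)\<^sup>2\<close> plus a continuous, midpoint convex
  penalty that is increasing in \<open>\<bar>x\<bar>\<close>; hence it has a unique minimizer, and this minimizer lies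
  in \<open>[-\<bar>g\<^sub>\<gamma>\<bar>, \<bar>g\<^sub>\<gamma>\<bar>]\<close>. By Bessel's inequality the minimizers are therefore square summable,
  so the series defining \<open>f\<^sub>m\<close> converges and has exactly these coefficients.\<close>

definition orthonormal_family :: "'g set \<Rightarrow> ('g \<Rightarrow> 'a::real_inner) \<Rightarrow> bool" where
  "orthonormal_family \<Gamma> \<phi> \<longleftrightarrow>
     (\<forall>i\<in>\<Gamma>. \<forall>j\<in>\<Gamma>. inner (\<phi> i) (\<phi> j) = (if i = j then 1 else 0))"

lemma orthonormal_basis_iff:
  "orthonormal_basis \<Gamma> \<phi> \<longleftrightarrow> orthonormal_family \<Gamma> \<phi> \<and> closure (span (\<phi> ` \<Gamma>)) = UNIV"
  unfolding orthonormal_basis_def orthonormal_family_def ..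

lemma inner_sum_orthonormal:
  assumes on: "orthonormal_family \<Gamma> \<phi>" and F: "finite F" "F \<subseteq> \<Gamma>" and \<delta>: "\<delta> \<in> \<Gamma>"
  shows "inner (\<Sum>\<gamma>\<in>F. c \<gamma> *\<^sub>R \<phi> \<gamma>) (\<phi> \<delta>) = (if \<delta> \<in> F then c \<delta> else 0)"
proof -
  have "inner (\<Sum>\<gamma>\<in>F. c \<gamma> *\<^sub>R \<phi> \<gamma>) (\<phi> \<delta>) = (\<Sum>\<gamma>\<in>F. if \<gamma> = \<delta> then c \<delta> else 0)"
    unfolding inner_sum_left
    using on F \<delta> unfolding orthonormal_family_def by (intro sum.cong) auto
  then show ?thesis
    using F by (simp add: sum.delta)
qed

lemma norm_sum_orthonormal_squared:
  assumes on: "orthonormal_family \<Gamma> \<phi>" and F: "finite F" "F \<subseteq> \<Gamma>"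
  shows "(norm (\<Sum>\<gamma>\<in>F. c \<gamma> *\<^sub>R \<phi> \<gamma>))\<^sup>2 = (\<Sum>\<gamma>\<in>F. (c \<gamma>)\<^sup>2)"
proof -
  let ?s = "\<Sum>\<gamma>\<in>F. c \<gamma> *\<^sub>R \<phi> \<gamma>"
  have "(norm ?s)\<^sup>2 = (\<Sum>\<gamma>\<in>F. c \<gamma> * inner ?s (\<phi> \<gamma>))"
    by (simp add: power2_norm_eq_inner inner_sum_right)
  also have "\<dots> = (\<Sum>\<gamma>\<in>F. (c \<gamma>)\<^sup>2)"
    using F inner_sum_orthonormal[OF on F] by (intro sum.cong) (auto simp: power2_eq_square)
  finally show ?thesis .
qed

lemma summable_on_small_tails:
  fixes f :: "'i \<Rightarrow> 'b::{real_normed_vector, complete_space}"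
  assumes tails: "\<And>e. e > 0 \<Longrightarrow>
    \<exists>F\<^sub>0. finite F\<^sub>0 \<and> F\<^sub>0 \<subseteq> A \<and> (\<forall>G. finite G \<and> G \<subseteq> A - F\<^sub>0 \<longrightarrow> norm (sum f G) \<le> e)"
  shows "f summable_on A"
proof -
  have "\<exists>P. eventually P (finite_subsets_at_top A) \<and>
            (\<forall>F F'. P F \<and> P F' \<longrightarrow> dist (sum f F) (sum f F') < e)" if "e > 0" for e
  proof -
    obtain F\<^sub>0 where F\<^sub>0: "finite F\<^sub>0" "F\<^sub>0 \<subseteq> A"
      and small: "\<And>G. finite G \<Longrightarrow> G \<subseteq> A - F\<^sub>0 \<Longrightarrow> norm (sum f G) \<le> e/3"
      using tails[of "e/3"] \<open>e > 0\<close> by auto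
    define P where "P F \<longleftrightarrow> finite F \<and> F\<^sub>0 \<subseteq> F \<and> F \<subseteq> A" for F
    have "eventually P (finite_subsets_at_top A)"
      unfolding P_def eventually_finite_subsets_at_top using F\<^sub>0 by blast
    moreover have "dist (sum f F) (sum f F') < e" if "P F" "P F'" for F F'
    proof -
      have sum_split: "sum f H = sum f F\<^sub>0 + sum f (H - F\<^sub>0)" if "P H" for H
        using that F\<^sub>0 unfolding P_def by (metis add.commute sum.subset_diff)
      have "dist (sum f F) (sum f F') = norm (sum f (F - F\<^sub>0) - sum f (F' - F\<^sub>0))"
        using sum_split[OF \<open>P F\<close>] sum_split[OF \<open>P F'\<close>] by (simp add: dist_norm)
      also have "\<dots> \<le> norm (sum f (F - F\<^sub>0)) + norm (sum f (F' - F\<^sub>0))"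
        by (rule norm_triangle_ineq4)
      also have "\<dots> \<le> e/3 + e/3"
        using that unfolding P_def by (intro add_mono small) auto
      finally show ?thesis
        using \<open>e > 0\<close> by linarith
    qed
    ultimately show ?thesis
      by blast
  qed
  then have "cauchy_filter (filtermap (sum f) (finite_subsets_at_top A))"
    by (simp add: cauchy_filter_metric_filtermap)
  moreover have "complete (UNIV :: 'b set)"
    by (meson Cauchy_convergent UNIV_I complete_def convergent_def)
  ultimately obtain L where "(sum f \<longlongrightarrow> L) (finite_subsets_at_top A)"
    using complete_uniform[where S=UNIV] by (force simp add: filterlim_def)
  then show ?thesis
    unfolding summable_on_def has_sum_def by blast
qed

lemma has_sum_nonneg_small_tails:
  fixes h :: "'i \<Rightarrow> real"
  assumes h: "(h has_sum S) A" and nonneg: "\<And>x. x \<in> A \<Longrightarrow> h x \<ge> 0" and "e > 0"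
  shows "\<exists>F\<^sub>0. finite F\<^sub>0 \<and> F\<^sub>0 \<subseteq> A \<and> (\<forall>G. finite G \<and> G \<subseteq> A - F\<^sub>0 \<longrightarrow> sum h G \<le> e)"
proof -
  obtain F\<^sub>0 where F\<^sub>0: "finite F\<^sub>0" "F\<^sub>0 \<subseteq> A" and close: "dist (sum h F\<^sub>0) S \<le> e"
    using has_sum_finite_approximation[OF h \<open>e > 0\<close>] by blast
  have "sum h G \<le> e" if G: "finite G" "G \<subseteq> A - F\<^sub>0" for G
  proof -
    have "sum h F\<^sub>0 + sum h G = sum h (F\<^sub>0 \<union> G)"
      using F\<^sub>0 G by (intro sum.union_disjoint[symmetric]) auto
    also have "\<dots> \<le> S"
      using F\<^sub>0 G by (intro finite_sum_le_has_sum[OF h] nonneg) auto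
    finally show ?thesis
      using close by (simp add: dist_real_def)
  qed
  then show ?thesis
    using F\<^sub>0 by blast
qed

lemma summable_on_orthonormal_series:
  fixes \<phi> :: "'g \<Rightarrow> 'a::{real_inner, complete_space}"
  assumes on: "orthonormal_family \<Gamma> \<phi>" and sq: "(\<lambda>\<gamma>. (c \<gamma>)\<^sup>2) summable_on \<Gamma>"
  shows "(\<lambda>\<gamma>. c \<gamma> *\<^sub>R \<phi> \<gamma>) summable_on \<Gamma>"
proof (rule summable_on_small_tails)
  fix e :: real
  assume "e > 0"
  then obtain F\<^sub>0 where F\<^sub>0: "finite F\<^sub>0" "F\<^sub>0 \<subseteq> \<Gamma>"
    and small: "\<And>G. finite G \<Longrightarrow> G \<subseteq> \<Gamma> - F\<^sub>0 \<Longrightarrow> (\<Sum>\<gamma>\<in>G. (c \<gamma>)\<^sup>2) \<le> e\<^sup>2"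
    using has_sum_nonneg_small_tails[OF has_sum_infsum[OF sq], of "e\<^sup>2"] by auto
  have "norm (\<Sum>\<gamma>\<in>G. c \<gamma> *\<^sub>R \<phi> \<gamma>) \<le> e" if "finite G" "G \<subseteq> \<Gamma> - F\<^sub>0" for G
  proof (rule power2_le_imp_le)
    have "G \<subseteq> \<Gamma>"
      using that by blast
    then show "(norm (\<Sum>\<gamma>\<in>G. c \<gamma> *\<^sub>R \<phi> \<gamma>))\<^sup>2 \<le> e\<^sup>2"
      using small[OF that] norm_sum_orthonormal_squared[OF on \<open>finite G\<close>] by simp
  qed (use \<open>e > 0\<close> in simp)
  then show "\<exists>F\<^sub>0. finite F\<^sub>0 \<and> F\<^sub>0 \<subseteq> \<Gamma> \<and>
      (\<forall>G. finite G \<and> G \<subseteq> \<Gamma> - F\<^sub>0 \<longrightarrow> norm (\<Sum>\<gamma>\<in>G. c \<gamma> *\<^sub>R \<phi> \<gamma>) \<le> e)"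
    using F\<^sub>0 by blast
qed

lemma inner_infsum_orthonormal:
  assumes on: "orthonormal_family \<Gamma> \<phi>"
    and summable: "(\<lambda>\<gamma>. c \<gamma> *\<^sub>R \<phi> \<gamma>) summable_on \<Gamma>" and \<delta>: "\<delta> \<in> \<Gamma>"
  shows "inner (\<Sum>\<^sub>\<infinity>\<gamma>\<in>\<Gamma>. c \<gamma> *\<^sub>R \<phi> \<gamma>) (\<phi> \<delta>) = c \<delta>"
proof -
  have "((\<lambda>\<gamma>. inner (c \<gamma> *\<^sub>R \<phi> \<gamma>) (\<phi> \<delta>)) has_sum inner (\<Sum>\<^sub>\<infinity>\<gamma>\<in>\<Gamma>. c \<gamma> *\<^sub>R \<phi> \<gamma>) (\<phi> \<delta>)) \<Gamma>"
    using summable by (intro has_sum_bounded_linear[OF bounded_linear_inner_left]) simp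
  moreover have "((\<lambda>\<gamma>. inner (c \<gamma> *\<^sub>R \<phi> \<gamma>) (\<phi> \<delta>)) has_sum c \<delta>) \<Gamma>"
    using on \<delta> by (intro has_sum_finite_neutralI[where B="{\<delta>}"]) (auto simp: orthonormal_family_def)
  ultimately show ?thesis
    using has_sum_unique by blast
qed

lemma bessel_inequality_finite:
  assumes on: "orthonormal_family \<Gamma> \<phi>" and F: "finite F" "F \<subseteq> \<Gamma>"
  shows "(\<Sum>\<gamma>\<in>F. (inner x (\<phi> \<gamma>))\<^sup>2) \<le> (norm x)\<^sup>2"
proof -
  define s where "s = (\<Sum>\<gamma>\<in>F. inner x (\<phi> \<gamma>) *\<^sub>R \<phi> \<gamma>)"
  have xs: "inner x s = (\<Sum>\<gamma>\<in>F. (inner x (\<phi> \<gamma>))\<^sup>2)"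
    unfolding s_def by (simp add: inner_sum_right power2_eq_square)
  have ss: "inner s s = (\<Sum>\<gamma>\<in>F. (inner x (\<phi> \<gamma>))\<^sup>2)"
    using norm_sum_orthonormal_squared[OF on F] unfolding s_def by (simp add: power2_norm_eq_inner)
  have "0 \<le> inner (x - s) (x - s)"
    by simp
  also have "\<dots> = inner x x - 2 * inner x s + inner s s"
    by (simp add: inner_diff_left inner_diff_right inner_commute)
  finally show ?thesis
    using xs ss by (simp add: power2_norm_eq_inner)
qed

lemma summable_on_squared_coefficients:
  assumes "orthonormal_family \<Gamma> \<phi>"
  shows "(\<lambda>\<gamma>. (inner x (\<phi> \<gamma>))\<^sup>2) summable_on \<Gamma>"
  using bessel_inequality_finite[OF assms]
  by (intro nonneg_bdd_above_summable_on bdd_aboveI[where M="(norm x)\<^sup>2"]) auto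

lemma orthonormal_basis_has_sum:
  fixes \<phi> :: "'g \<Rightarrow> 'a::{real_inner, complete_space}"
  assumes onb: "orthonormal_basis \<Gamma> \<phi>"
  shows "((\<lambda>\<gamma>. inner x (\<phi> \<gamma>) *\<^sub>R \<phi> \<gamma>) has_sum x) \<Gamma>"
proof -
  have on: "orthonormal_family \<Gamma> \<phi>" and dense: "closure (span (\<phi> ` \<Gamma>)) = UNIV"
    using onb by (simp_all add: orthonormal_basis_iff)
  have summable: "(\<lambda>\<gamma>. inner x (\<phi> \<gamma>) *\<^sub>R \<phi> \<gamma>) summable_on \<Gamma>"
    by (rule summable_on_orthonormal_series[OF on summable_on_squared_coefficients[OF on]])
  define r where "r = x - (\<Sum>\<^sub>\<infinity>\<gamma>\<in>\<Gamma>. inner x (\<phi> \<gamma>) *\<^sub>R \<phi> \<gamma>)"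
  have "inner r (\<phi> \<delta>) = 0" if "\<delta> \<in> \<Gamma>" for \<delta>
    unfolding r_def inner_diff_left using inner_infsum_orthonormal[OF on summable that] by simp
  then have "span (\<phi> ` \<Gamma>) \<subseteq> {y. inner r y = 0}"
    by (intro span_minimal) (auto simp: subspace_def inner_add_right)
  then have "closure (span (\<phi> ` \<Gamma>)) \<subseteq> {y. inner r y = 0}"
    by (rule closure_minimal) (intro closed_Collect_eq continuous_intros)
  then have "inner r r = 0"
    using dense by blast
  then have "r = 0"
    by simp
  then show ?thesis
    using summable unfolding r_def by (simp add: has_sum_iff)
qed

lemma parseval_has_sum:
  fixes \<phi> :: "'g \<Rightarrow> 'a::{real_inner, complete_space}"
  assumes "orthonormal_basis \<Gamma> \<phi>"
  shows "((\<lambda>\<gamma>. (inner x (\<phi> \<gamma>))\<^sup>2) has_sum (norm x)\<^sup>2) \<Gamma>"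
proof -
  have "((\<lambda>\<gamma>. inner (inner x (\<phi> \<gamma>) *\<^sub>R \<phi> \<gamma>) x) has_sum inner x x) \<Gamma>"
    by (rule has_sum_bounded_linear[OF bounded_linear_inner_left orthonormal_basis_has_sum[OF assms]])
  then show ?thesis
    by (simp add: power2_eq_square inner_commute flip: power2_norm_eq_inner)
qed

lemma power2_sgn_mult_abs_minus_le:
  fixes y z :: real
  assumes "\<bar>y\<bar> \<le> \<bar>z\<bar>"
  shows "(sgn z * \<bar>y\<bar> - y)\<^sup>2 \<le> (z - y)\<^sup>2"
proof -
  let ?c = "sgn z * \<bar>y\<bar>"
  have "(z - y)\<^sup>2 - (?c - y)\<^sup>2 = (z - ?c) * (z + ?c - 2 * y)"
    by (simp add: power2_eq_square algebra_simps)
  moreover have "0 \<le> (z - ?c) * (z + ?c - 2 * y)"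
  proof (cases "z \<ge> 0")
    case True
    then show ?thesis
      using assms by (intro mult_nonneg_nonneg) (auto simp: sgn_if)
  next
    case False
    then show ?thesis
      using assms by (intro mult_nonpos_nonpos) (auto simp: sgn_if)
  qed
  ultimately show ?thesis
    by simp
qed

lemma quadratic_plus_abs_mono_has_minimizer:
  fixes P :: "real \<Rightarrow> real"
  assumes cont: "continuous_on UNIV P" and mono: "\<And>a b. \<bar>a\<bar> \<le> \<bar>b\<bar> \<Longrightarrow> P a \<le> P b"
  shows "\<exists>x. \<bar>x\<bar> \<le> \<bar>y\<bar> \<and> (\<forall>z. (x - y)\<^sup>2 + P x \<le> (z - y)\<^sup>2 + P z)"
proof -
  let ?M = "\<lambda>x. (x - y)\<^sup>2 + P x"
  have "\<exists>x\<in>{-\<bar>y\<bar>..\<bar>y\<bar>}. \<forall>z\<in>{-\<bar>y\<bar>..\<bar>y\<bar>}. ?M x \<le> ?M z"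
    using continuous_on_subset[OF cont]
    by (intro continuous_attains_inf continuous_intros) auto
  then obtain x where x: "x \<in> {-\<bar>y\<bar>..\<bar>y\<bar>}" and min: "\<And>z. z \<in> {-\<bar>y\<bar>..\<bar>y\<bar>} \<Longrightarrow> ?M x \<le> ?M z"
    by blast
  have "?M x \<le> ?M z" for z
  proof (cases "\<bar>z\<bar> \<le> \<bar>y\<bar>")
    case True
    then show ?thesis
      by (intro min) auto
  next
    case False
    have "?M x \<le> ?M (sgn z * \<bar>y\<bar>)"
      by (intro min) (auto simp: sgn_if)
    also have "\<dots> \<le> ?M z"
      using False by (intro add_mono power2_sgn_mult_abs_minus_le mono) (auto simp: abs_mult abs_sgn_eq)
    finally show ?thesis .
  qed
  moreover have "\<bar>x\<bar> \<le> \<bar>y\<bar>"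
    using x by auto
  ultimately show ?thesis
    by blast
qed

lemma quadratic_plus_midpoint_convex_minimizer_unique:
  fixes P :: "real \<Rightarrow> real"
  assumes midconvex: "\<And>a b. P ((a + b) / 2) \<le> (P a + P b) / 2"
    and a: "\<forall>z. (a - y)\<^sup>2 + P a \<le> (z - y)\<^sup>2 + P z"
    and b: "\<forall>z. (b - y)\<^sup>2 + P b \<le> (z - y)\<^sup>2 + P z"
  shows "a = b"
proof (rule ccontr)
  assume "a \<noteq> b"
  define gap where "gap = (a - b)\<^sup>2 / 4"
  have "gap > 0"
    using \<open>a \<noteq> b\<close> by (simp add: gap_def)
  have "((a + b) / 2 - y)\<^sup>2 = ((a - y)\<^sup>2 + (b - y)\<^sup>2) / 2 - gap"
    by (simp add: gap_def power2_eq_square field_simps)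
  then have "((a + b) / 2 - y)\<^sup>2 + P ((a + b) / 2) < ((a - y)\<^sup>2 + P a + ((b - y)\<^sup>2 + P b)) / 2"
    using midconvex[of a b] \<open>gap > 0\<close> by argo
  moreover have "(a - y)\<^sup>2 + P a = (b - y)\<^sup>2 + P b"
    using a b by (meson order.antisym)
  moreover have "(a - y)\<^sup>2 + P a \<le> ((a + b) / 2 - y)\<^sup>2 + P ((a + b) / 2)"
    using a by blast
  ultimately show False
    by argo
qed

lemma abs_powr_midpoint_convex:
  fixes a b q :: real
  assumes q: "q \<ge> 1"
  shows "\<bar>(a + b) / 2\<bar> powr q \<le> (\<bar>a\<bar> powr q + \<bar>b\<bar> powr q) / 2"
proof -
  have half: "(u / 2) powr q \<le> u powr q / 2" if "u \<ge> 0" for u :: real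
  proof -
    have "(2::real) \<le> 2 powr q"
      using powr_mono[OF q, of 2] by simp
    have "(u / 2) powr q = u powr q / 2 powr q"
      using that by (simp add: powr_divide)
    also have "\<dots> \<le> u powr q / 2"
      using \<open>2 \<le> 2 powr q\<close> by (intro divide_left_mono) auto
    finally show ?thesis .
  qed
  have "\<bar>(a + b) / 2\<bar> powr q \<le> ((\<bar>a\<bar> + \<bar>b\<bar>) / 2) powr q"
    using q by (intro powr_mono2) auto
  also have "\<dots> \<le> (\<bar>a\<bar> powr q + \<bar>b\<bar> powr q) / 2"
  proof (cases "a = 0 \<or> b = 0")
    case True
    then show ?thesis
      using half[of "\<bar>a\<bar>"] half[of "\<bar>b\<bar>"] q by auto
  next
    case False
    then show ?thesis
      using convex_onD[OF powr_convex[OF q], of "1/2" "\<bar>a\<bar>" "\<bar>b\<bar>"] by (simp add: field_simps)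
  qed
  finally show ?thesis .
qed

lemma continuous_on_weighted_abs_powr_sum:
  fixes S :: "real set"
  assumes "\<And>i. i \<in> I \<Longrightarrow> p i > 0"
  shows "continuous_on S (\<lambda>x. \<Sum>i\<in>I. ws i * \<bar>x\<bar> powr p i)"
proof -
  have "continuous_on S (\<lambda>x. \<bar>x\<bar> powr p i)" if "i \<in> I" for i
    using assms[OF that] by (intro continuous_on_powr' continuous_intros) auto
  then show ?thesis
    by (intro continuous_on_sum continuous_on_mult continuous_on_const) auto
qed

lemma weighted_abs_powr_sum_mono:
  fixes a b :: real
  assumes "\<And>i. i \<in> I \<Longrightarrow> 0 \<le> ws i \<and> 0 \<le> p i" and "\<bar>a\<bar> \<le> \<bar>b\<bar>"
  shows "(\<Sum>i\<in>I. ws i * \<bar>a\<bar> powr p i) \<le> (\<Sum>i\<in>I. ws i * \<bar>b\<bar> powr p i)"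
proof (intro sum_mono mult_left_mono)
  fix i
  assume "i \<in> I"
  with assms show "\<bar>a\<bar> powr p i \<le> \<bar>b\<bar> powr p i" "0 \<le> ws i"
    by (auto intro: powr_mono2)
qed

lemma weighted_abs_powr_sum_midpoint_convex:
  fixes a b :: real
  assumes "\<And>i. i \<in> I \<Longrightarrow> 0 \<le> ws i \<and> 1 \<le> p i"
  shows "(\<Sum>i\<in>I. ws i * \<bar>(a + b) / 2\<bar> powr p i)
    \<le> ((\<Sum>i\<in>I. ws i * \<bar>a\<bar> powr p i) + (\<Sum>i\<in>I. ws i * \<bar>b\<bar> powr p i)) / 2"
proof -
  have "(\<Sum>i\<in>I. ws i * \<bar>(a + b) / 2\<bar> powr p i) \<le> (\<Sum>i\<in>I. ws i * ((\<bar>a\<bar> powr p i + \<bar>b\<bar> powr p i) / 2))"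
    using assms by (intro sum_mono mult_left_mono abs_powr_midpoint_convex) auto
  also have "\<dots> = ((\<Sum>i\<in>I. ws i * \<bar>a\<bar> powr p i) + (\<Sum>i\<in>I. ws i * \<bar>b\<bar> powr p i)) / 2"
    by (simp add: sum_divide_distrib[symmetric] sum.distrib[symmetric] algebra_simps)
  finally show ?thesis .
qed

lemma Mfun_eq: "Mfun n ws p y x = (x - y)\<^sup>2 + (\<Sum>i\<in>{1..n}. ws i * \<bar>x\<bar> powr p i)"
  unfolding Mfun_def by (simp add: power2_diff algebra_simps)

lemma Smin_minimizes_Mfun:
  assumes ws_p: "\<And>i. i \<in> {1..n} \<Longrightarrow> 0 \<le> ws i \<and> 1 \<le> p i"
  shows "(\<forall>z. Mfun n ws p y (Smin n ws p y) \<le> Mfun n ws p y z) \<and> \<bar>Smin n ws p y\<bar> \<le> \<bar>y\<bar>"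
proof -
  define P where "P x = (\<Sum>i\<in>{1..n}. ws i * \<bar>x\<bar> powr p i)" for x
  have M: "Mfun n ws p y = (\<lambda>x. (x - y)\<^sup>2 + P x)"
    by (simp add: Mfun_eq P_def fun_eq_iff)
  have "continuous_on UNIV P"
    unfolding P_def using ws_p by (intro continuous_on_weighted_abs_powr_sum) fastforce
  moreover have "P a \<le> P b" if "\<bar>a\<bar> \<le> \<bar>b\<bar>" for a b
    unfolding P_def using ws_p that by (intro weighted_abs_powr_sum_mono) fastforce+
  ultimately obtain x where x: "\<bar>x\<bar> \<le> \<bar>y\<bar>" "\<forall>z. (x - y)\<^sup>2 + P x \<le> (z - y)\<^sup>2 + P z"
    using quadratic_plus_abs_mono_has_minimizer by blast
  have midconvex: "P ((a + b) / 2) \<le> (P a + P b) / 2" for a b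
    unfolding P_def using ws_p by (rule weighted_abs_powr_sum_midpoint_convex)
  have "Smin n ws p y = x"
    unfolding Smin_def M
  proof (rule the_equality)
    fix x'
    assume "\<forall>z. (x' - y)\<^sup>2 + P x' \<le> (z - y)\<^sup>2 + P z"
    then show "x' = x"
      using x(2) by (rule quadratic_plus_midpoint_convex_minimizer_unique[OF midconvex])
  qed (fact x(2))
  then show ?thesis
    using x unfolding M by simp
qed

lemma ennreal_infsum:
  fixes h :: "'i \<Rightarrow> real"
  assumes "h summable_on A" and "\<And>x. x \<in> A \<Longrightarrow> h x \<ge> 0"
  shows "ennreal (infsum h A) = (\<Sum>\<^sub>\<infinity>x\<in>A. ennreal (h x))"
proof -
  have "infsum (ennreal \<circ> h) A = ennreal (infsum h A)"
  proof (rule infsum_comm_additive_general)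
    show "sum (ennreal \<circ> h) F = ennreal (sum h F)" if "finite F" "F \<subseteq> A" for F
      using that assms(2) by (auto intro!: sum_ennreal)
    show "isCont ennreal (infsum h A)"
      unfolding isCont_def by (intro tendsto_ennrealI tendsto_ident_at)
  qed fact
  then show ?thesis
    by (simp add: o_def)
qed

lemma has_sum_sum:
  fixes f :: "'j \<Rightarrow> 'i \<Rightarrow> 'b::topological_comm_monoid_add"
  assumes "finite I" and "\<And>i. i \<in> I \<Longrightarrow> (f i has_sum s i) A"
  shows "((\<lambda>x. \<Sum>i\<in>I. f i x) has_sum (\<Sum>i\<in>I. s i)) A"
  using assms by (induction I rule: finite_induct) (auto intro: has_sum_add)

lemma Phi_eq_infsum_Mfun:
  fixes \<phi> :: "'g \<Rightarrow> 'a::{real_inner, complete_space}"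
  assumes onb: "orthonormal_basis \<Gamma> \<phi>"
    and w_nonneg: "\<And>i \<gamma>. i \<in> {1..n} \<Longrightarrow> \<gamma> \<in> \<Gamma> \<Longrightarrow> 0 \<le> w i \<gamma>"
  shows "Phi \<Gamma> \<phi> g n w p f
     = (\<Sum>\<^sub>\<infinity>\<gamma>\<in>\<Gamma>. ennreal (Mfun n (\<lambda>i. w i \<gamma>) p (inner g (\<phi> \<gamma>)) (inner f (\<phi> \<gamma>))))"
proof -
  let ?h = "\<lambda>\<gamma>. (inner f (\<phi> \<gamma>) - inner g (\<phi> \<gamma>))\<^sup>2"
  let ?q = "\<lambda>i \<gamma>. ennreal (w i \<gamma> * \<bar>inner f (\<phi> \<gamma>)\<bar> powr p i)"
  have "ennreal ((norm (f - g))\<^sup>2) = (\<Sum>\<^sub>\<infinity>\<gamma>\<in>\<Gamma>. ennreal (?h \<gamma>))"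
    using parseval_has_sum[OF onb, of "f - g"]
    by (simp add: inner_diff_left has_sum_iff flip: ennreal_infsum)
  moreover have "(\<Sum>i\<in>{1..n}. wnorm_pow \<Gamma> \<phi> (w i) (p i) f) = (\<Sum>\<^sub>\<infinity>\<gamma>\<in>\<Gamma>. \<Sum>i\<in>{1..n}. ?q i \<gamma>)"
    unfolding wnorm_pow_def
    by (intro infsumI[symmetric] has_sum_sum has_sum_infsum nonneg_summable_on_complete) auto
  ultimately have "Phi \<Gamma> \<phi> g n w p f = (\<Sum>\<^sub>\<infinity>\<gamma>\<in>\<Gamma>. ennreal (?h \<gamma>)) + (\<Sum>\<^sub>\<infinity>\<gamma>\<in>\<Gamma>. \<Sum>i\<in>{1..n}. ?q i \<gamma>)"
    unfolding Phi_def by simp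
  also have "\<dots> = (\<Sum>\<^sub>\<infinity>\<gamma>\<in>\<Gamma>. ennreal (?h \<gamma>) + (\<Sum>i\<in>{1..n}. ?q i \<gamma>))"
    by (intro infsum_add[symmetric] nonneg_summable_on_complete) auto
  also have "\<dots> = (\<Sum>\<^sub>\<infinity>\<gamma>\<in>\<Gamma>. ennreal (Mfun n (\<lambda>i. w i \<gamma>) p (inner g (\<phi> \<gamma>)) (inner f (\<phi> \<gamma>))))"
  proof (rule infsum_cong)
    fix \<gamma>
    assume "\<gamma> \<in> \<Gamma>"
    then have nonneg: "0 \<le> w i \<gamma> * \<bar>inner f (\<phi> \<gamma>)\<bar> powr p i" if "i \<in> {1..n}" for i
      using w_nonneg[OF that] by simp
    then have "(\<Sum>i\<in>{1..n}. ?q i \<gamma>) = ennreal (\<Sum>i\<in>{1..n}. w i \<gamma> * \<bar>inner f (\<phi> \<gamma>)\<bar> powr p i)"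
      by (rule sum_ennreal)
    moreover have "0 \<le> (\<Sum>i\<in>{1..n}. w i \<gamma> * \<bar>inner f (\<phi> \<gamma>)\<bar> powr p i)"
      using nonneg by (rule sum_nonneg)
    ultimately show "ennreal (?h \<gamma>) + (\<Sum>i\<in>{1..n}. ?q i \<gamma>)
        = ennreal (Mfun n (\<lambda>i. w i \<gamma>) p (inner g (\<phi> \<gamma>)) (inner f (\<phi> \<gamma>)))"
      by (simp add: Mfun_eq ennreal_plus)
  qed
  finally show ?thesis .
qed

lemma Phi_le_if_coefficients_minimize_Mfun:
  fixes \<phi> :: "'g \<Rightarrow> 'a::{real_inner, complete_space}"
  assumes onb: "orthonormal_basis \<Gamma> \<phi>"
    and w_nonneg: "\<And>i \<gamma>. i \<in> {1..n} \<Longrightarrow> \<gamma> \<in> \<Gamma> \<Longrightarrow> 0 \<le> w i \<gamma>"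
    and min: "\<And>\<gamma>. \<gamma> \<in> \<Gamma> \<Longrightarrow>
      Mfun n (\<lambda>i. w i \<gamma>) p (inner g (\<phi> \<gamma>)) (inner h (\<phi> \<gamma>))
        \<le> Mfun n (\<lambda>i. w i \<gamma>) p (inner g (\<phi> \<gamma>)) (inner f (\<phi> \<gamma>))"
  shows "Phi \<Gamma> \<phi> g n w p h \<le> Phi \<Gamma> \<phi> g n w p f"
proof -
  have "Phi \<Gamma> \<phi> g n w p h
      = (\<Sum>\<^sub>\<infinity>\<gamma>\<in>\<Gamma>. ennreal (Mfun n (\<lambda>i. w i \<gamma>) p (inner g (\<phi> \<gamma>)) (inner h (\<phi> \<gamma>))))"
    by (rule Phi_eq_infsum_Mfun[OF onb w_nonneg])
  also have "\<dots> \<le> (\<Sum>\<^sub>\<infinity>\<gamma>\<in>\<Gamma>. ennreal (Mfun n (\<lambda>i. w i \<gamma>) p (inner g (\<phi> \<gamma>)) (inner f (\<phi> \<gamma>))))"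
    using min by (intro infsum_mono nonneg_summable_on_complete ennreal_leI) auto
  also have "\<dots> = Phi \<Gamma> \<phi> g n w p f"
    by (rule Phi_eq_infsum_Mfun[OF onb w_nonneg, symmetric])
  finally show ?thesis .
qed

theorem lemma1p1:
  fixes \<Gamma> :: "'g set" and \<phi> :: "'g \<Rightarrow> 'a::{real_inner, complete_space}"
    and g :: 'a and n :: nat and p :: "nat \<Rightarrow> real" and w :: "nat \<Rightarrow> 'g \<Rightarrow> real"
  assumes onb: "orthonormal_basis \<Gamma> \<phi>"
    and p_range: "\<And>i. i \<in> {1..n} \<Longrightarrow> 1 \<le> p i \<and> p i \<le> 2"
    and w_pos: "\<And>i \<gamma>. i \<in> {1..n} \<Longrightarrow> \<gamma> \<in> \<Gamma> \<Longrightarrow> w i \<gamma> > 0"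
  shows "(\<lambda>\<gamma>. Smin n (\<lambda>i. w i \<gamma>) p (inner g (\<phi> \<gamma>)) *\<^sub>R \<phi> \<gamma>) summable_on \<Gamma>
     \<and> (\<forall>f. Phi \<Gamma> \<phi> g n w p
              (\<Sum>\<^sub>\<infinity>\<gamma>\<in>\<Gamma>. Smin n (\<lambda>i. w i \<gamma>) p (inner g (\<phi> \<gamma>)) *\<^sub>R \<phi> \<gamma>)
            \<le> Phi \<Gamma> \<phi> g n w p f)"
proof -
  have on: "orthonormal_family \<Gamma> \<phi>"
    using onb by (simp add: orthonormal_basis_iff)
  have w_nonneg: "\<And>i \<gamma>. i \<in> {1..n} \<Longrightarrow> \<gamma> \<in> \<Gamma> \<Longrightarrow> 0 \<le> w i \<gamma>"
    using w_pos less_imp_le by blast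
  define c where "c \<gamma> = Smin n (\<lambda>i. w i \<gamma>) p (inner g (\<phi> \<gamma>))" for \<gamma>
  have c_min: "(\<forall>z. Mfun n (\<lambda>i. w i \<gamma>) p (inner g (\<phi> \<gamma>)) (c \<gamma>) \<le> Mfun n (\<lambda>i. w i \<gamma>) p (inner g (\<phi> \<gamma>)) z)
      \<and> \<bar>c \<gamma>\<bar> \<le> \<bar>inner g (\<phi> \<gamma>)\<bar>" if "\<gamma> \<in> \<Gamma>" for \<gamma>
    unfolding c_def by (rule Smin_minimizes_Mfun) (use w_nonneg[OF _ that] p_range in auto)
  have "(\<lambda>\<gamma>. (c \<gamma>)\<^sup>2) summable_on \<Gamma>"
    using c_min
    by (intro summable_on_comparison_test[OF summable_on_squared_coefficients[OF on, of g]])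
      (auto simp: abs_le_square_iff)
  then have summable: "(\<lambda>\<gamma>. c \<gamma> *\<^sub>R \<phi> \<gamma>) summable_on \<Gamma>"
    by (rule summable_on_orthonormal_series[OF on])
  have "Phi \<Gamma> \<phi> g n w p (\<Sum>\<^sub>\<infinity>\<gamma>\<in>\<Gamma>. c \<gamma> *\<^sub>R \<phi> \<gamma>) \<le> Phi \<Gamma> \<phi> g n w p f" for f
    using c_min inner_infsum_orthonormal[OF on summable]
    by (intro Phi_le_if_coefficients_minimize_Mfun[OF onb w_nonneg]) auto
  with summable show ?thesis
    unfolding c_def by blast
qed

end
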